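(* Let $y,l,u\in\mathcal{R}(\mathbb{R}^{+},\mathbb{R})$ be such that $l\leq u$, $l_0\leq y_0\leq u_0$, and $\inf_{s\leq t}(u_s-l_s)>0$ for every $t\geq 0$. Let $(x,k)$ with $k=\phi^1-\phi^2$ and $(\tilde{x},\tilde{k})$ with $\tilde{k}=\tilde{\phi}^1-\tilde{\phi}^2$ be two solutions of the reflection problem $RP^u_l(y)$. Then: (i) $\{t:\Delta^{+}\phi^1_t>0\}\cap\{t:\Delta^{+}\phi^2_t>0\}=\emptyset$; (ii) $\{t:\Delta^{+}\phi^1_t>0\}=\{t:\Delta^{+}\tilde{\phi}^1_t>0\}$ and $\{t:\Delta^{+}\phi^2_t>0\}=\{t:\Delta^{+}\tilde{\phi}^2_t>0\}$.
   Context: A function $f:\mathbb{R}^+=[0,\infty)\to\mathbb{R}$ is regulated if it has a left limit $f_{t^-}$ at every $t>0$ and a right limit $f_{t^+}$ at every $t\geq0$; $\mathcal{R}(\mathbb{R}^{+},\mathbb{R})$ is the set of regulated functions. Write $\Delta^+f_t=f_{t^+}-f_t$, $\Delta^-f_t=f_t-f_{t^-}$, $a\wedge b=\min(a,b)$, $a\vee b=\max(a,b)$. A regulated function $\phi$ of bounded variation (on every $[0,t]$) decomposes as $\phi_t=\phi^c_t+\sum_{0<s\leq t}\Delta^-\phi_s+\sum_{0\leq s<t}\Delta^+\phi_s$ with $\phi^c$ continuous; its right-continuous part is $\phi^r_t=\phi^c_t+\sum_{0<s\leq t}\Delta^-\phi_s$. Reflection problem $RP^u_l(y)$: for $y,l,u\in\mathcal{R}(\mathbb{R}^{+},\mathbb{R})$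 with $l_0\leq y_0\leq u_0$, a pair $(x,k)$ of regulated functions is a solution if there exist $\phi^1,\phi^2$ such that: (i) $x=y+k=y+\phi^1-\phi^2$; (ii) $l\leq x\leq u$; (iii) $\phi^1,\phi^2$ are non-decreasing with $\phi^1_0=\phi^2_0=0$; (iv) $\int_{[0,\infty[}\big((x_s-l_s)\wedge(x_{s^+}-l_{s^+})\big)\,d\phi^{1,r}_s=\int_{[0,\infty[}\big((u_s-x_s)\wedge(u_{s^+}-x_{s^+})\big)\,d\phi^{2,r}_s=0$; (v) for every $t\geq0$, $\sum_{s\leq t}(x_{s^+}-l_{s^+})\Delta^+\phi^1_s=\sum_{s\leq t}(u_s-x_s)\Delta^+\phi^1_s=0$ and $\sum_{s\leq t}(u_{s^+}-x_{s^+})\Delta^+\phi^2_s=\sum_{s\leq t}(x_s-l_s)\Delta^+\phi^2_s=0$. Here $\phi^{i,r}$ is the right-continuous part of $\phi^i$. *)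

theory Defs
  imports "HOL-Analysis.Analysis"
begin

text \<open>Functions on R+ = [0,inf) are modelled as real => real; values at negative
  arguments are irrelevant (all conditions only look at t >= 0 and at one-sided limits
  at points t > 0 resp. t >= 0).\<close>

definition regulated :: "(real \<Rightarrow> real) \<Rightarrow> bool" where
  "regulated f \<longleftrightarrow>
     (\<forall>t>0. \<exists>L. (f \<longlongrightarrow> L) (at_left t)) \<and>
     (\<forall>t\<ge>0. \<exists>L. (f \<longlongrightarrow> L) (at_right t))"

definition rlim :: "(real \<Rightarrow> real) \<Rightarrow> real \<Rightarrow> real" where
  "rlim f t = Lim (at_right t) f"

definition llim :: "(real \<Rightarrow> real) \<Rightarrow> real \<Rightarrow> real" where
  "llim f t = Lim (at_left t) f"

definition jump_plus :: "(real \<Rightarrow> real) \<Rightarrow> real \<Rightarrow> real" where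
  "jump_plus f t = rlim f t - f t"

text \<open>Right-continuous part phi^r_t = phi^c_t + sum_{0<s<=t} Delta^- phi_s, which by the
  decomposition phi_t = phi^c_t + sum_{0<s<=t} Delta^- phi_s + sum_{0<=s<t} Delta^+ phi_s equals
  phi_t - sum_{0<=s<t} Delta^+ phi_s.  Extended by 0 to negative arguments (phi^r_0 = phi_0 = 0
  here), so that the associated Lebesgue-Stieltjes measure has no mass on (-inf,0].\<close>
definition rc_part :: "(real \<Rightarrow> real) \<Rightarrow> real \<Rightarrow> real" where
  "rc_part \<phi> t = (if t < 0 then 0 else \<phi> t - (\<Sum>\<^sub>\<infinity>s\<in>{0..<t}. jump_plus \<phi> s))"

definition RP_solution ::
  "(real \<Rightarrow> real) \<Rightarrow> (real \<Rightarrow> real) \<Rightarrow> (real \<Rightarrow> real) \<Rightarrow>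
   (real \<Rightarrow> real) \<Rightarrow> (real \<Rightarrow> real) \<Rightarrow> (real \<Rightarrow> real) \<Rightarrow> (real \<Rightarrow> real) \<Rightarrow> bool" where
  "RP_solution y l u x k \<phi>1 \<phi>2 \<longleftrightarrow>
     regulated x \<and> regulated k \<and>
     \<comment> \<open>(i)\<close>
     (\<forall>t\<ge>0. x t = y t + k t \<and> k t = \<phi>1 t - \<phi>2 t) \<and>
     \<comment> \<open>(ii)\<close>
     (\<forall>t\<ge>0. l t \<le> x t \<and> x t \<le> u t) \<and>
     \<comment> \<open>(iii)\<close>
     mono_on {0..} \<phi>1 \<and> mono_on {0..} \<phi>2 \<and> \<phi>1 0 = 0 \<and> \<phi>2 0 = 0 \<and>
     \<comment> \<open>(iv)\<close>
     (\<integral>\<^sup>+ s \<in> {0..}. ennreal (min (x s - l s) (rlim x s - rlim l s))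
         \<partial>interval_measure (rc_part \<phi>1)) = 0 \<and>
     (\<integral>\<^sup>+ s \<in> {0..}. ennreal (min (u s - x s) (rlim u s - rlim x s))
         \<partial>interval_measure (rc_part \<phi>2)) = 0 \<and>
     \<comment> \<open>(v)\<close>
     (\<forall>t\<ge>0.
        ((\<lambda>s. (rlim x s - rlim l s) * jump_plus \<phi>1 s) has_sum 0) {0..t} \<and>
        ((\<lambda>s. (u s - x s) * jump_plus \<phi>1 s) has_sum 0) {0..t} \<and>
        ((\<lambda>s. (rlim u s - rlim x s) * jump_plus \<phi>2 s) has_sum 0) {0..t} \<and>
        ((\<lambda>s. (x s - l s) * jump_plus \<phi>2 s) has_sum 0) {0..t})"

end

theory Submission
  imports Defs
begin

text \<open>Everything happens at a single time \<open>t\<close>, where \<open>l t < u t\<close> by the infimum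
  hypothesis.  Condition (v) lets \<open>\<phi>1\<close> jump
  only where \<open>x t = u t\<close> and \<open>x(t+) = l(t+)\<close>, and \<open>\<phi>2\<close> only where \<open>x t = l t\<close> and
  \<open>x(t+) = u(t+)\<close>; hence they never jump together.  At a jump of \<open>\<phi>1\<close> the jump of \<open>x\<close>
  is therefore \<open>\<Delta>\<^sup>+y + \<Delta>\<^sup>+\<phi>1 > \<Delta>\<^sup>+y\<close> and equals \<open>l(t+) - u t\<close>, the least jump any
  solution can make at \<open>t\<close>.  If \<open>\<psi>1\<close> did not jump, the jump of \<open>x'\<close> would be
  \<open>\<Delta>\<^sup>+y - \<Delta>\<^sup>+\<psi>2 \<le> \<Delta>\<^sup>+y\<close>, which is too small.  Jumps of \<open>\<phi>2\<close> are handled symmetrically.\<close>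

lemma rlim_eqI:
  assumes "(f \<longlongrightarrow> L) (at_right t)"
  shows "rlim f t = L"
  unfolding rlim_def using tendsto_Lim[OF trivial_limit_at_right_real assms] .

lemma regulated_tendsto_rlim:
  assumes "regulated f" and "t \<ge> 0"
  shows "(f \<longlongrightarrow> rlim f t) (at_right t)"
proof -
  obtain L where "(f \<longlongrightarrow> L) (at_right t)"
    using assms unfolding regulated_def by blast
  then show ?thesis by (metis rlim_eqI)
qed

lemma mono_on_tendsto_rlim:
  fixes f :: "real \<Rightarrow> real"
  assumes mono: "mono_on {0..} f" and "t \<ge> 0"
  shows "(f \<longlongrightarrow> rlim f t) (at_right t)"
proof -
  have "(f \<longlongrightarrow> Inf (f ` ({t<..} \<inter> {t<..}))) (at t within ({t<..} \<inter> {t<..}))"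
    by (rule Lim_right_bound[where K = "f t"])
      (use \<open>t \<ge> 0\<close> in \<open>auto intro: mono_onD[OF mono]\<close>)
  then show ?thesis by (metis Int_absorb rlim_eqI)
qed

lemma rlim_mono:
  fixes f g :: "real \<Rightarrow> real"
  assumes "(f \<longlongrightarrow> rlim f t) (at_right t)" and "(g \<longlongrightarrow> rlim g t) (at_right t)"
    and "\<And>s. s > t \<Longrightarrow> f s \<le> g s"
  shows "rlim f t \<le> rlim g t"
proof (rule tendsto_le[OF trivial_limit_at_right_real assms(2,1)])
  show "\<forall>\<^sub>F s in at_right t. f s \<le> g s"
    using assms(3) by (auto simp: eventually_at_filter)
qed

lemma mono_on_jump_plus_nonneg:
  fixes f :: "real \<Rightarrow> real"
  assumes mono: "mono_on {0..} f" and "t \<ge> 0"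
  shows "jump_plus f t \<ge> 0"
proof -
  have const: "rlim (\<lambda>_. f t) t = f t"
    by (rule rlim_eqI) simp
  have "rlim (\<lambda>_. f t) t \<le> rlim f t"
    by (rule rlim_mono) (use assms const in \<open>auto intro: mono_on_tendsto_rlim mono_onD[OF mono]\<close>)
  then show ?thesis by (simp add: jump_plus_def const)
qed

lemma jump_plus_add_diff:
  fixes x y f g :: "real \<Rightarrow> real"
  assumes "(y \<longlongrightarrow> rlim y t) (at_right t)" and "(f \<longlongrightarrow> rlim f t) (at_right t)"
    and "(g \<longlongrightarrow> rlim g t) (at_right t)"
    and "\<And>s. s \<ge> t \<Longrightarrow> x s = y s + f s - g s"
  shows "jump_plus x t = jump_plus y t + jump_plus f t - jump_plus g t"
proof -
  have "((\<lambda>s. y s + f s - g s) \<longlongrightarrow> rlim y t + rlim f t - rlim g t) (at_right t)"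
    by (intro tendsto_intros assms(1-3))
  moreover have "\<forall>\<^sub>F s in at_right t. y s + f s - g s = x s"
    using assms(4) by (auto simp: eventually_at_filter)
  ultimately have "(x \<longlongrightarrow> rlim y t + rlim f t - rlim g t) (at_right t)"
    by (rule Lim_transform_eventually)
  then show ?thesis
    using assms(4)[of t] by (simp add: jump_plus_def rlim_eqI)
qed

lemma RP_solution_jump_plus_nonneg:
  assumes "RP_solution y l u x k \<phi>1 \<phi>2" and "t \<ge> 0"
  shows "jump_plus \<phi>1 t \<ge> 0" and "jump_plus \<phi>2 t \<ge> 0"
  using assms by (auto simp: RP_solution_def intro: mono_on_jump_plus_nonneg)

lemma RP_solution_bounds:
  assumes "RP_solution y l u x k \<phi>1 \<phi>2" and "t \<ge> 0"
  shows "l t \<le> x t" and "x t \<le> u t"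
  using assms unfolding RP_solution_def by blast+

lemma RP_solution_rlim_bounds:
  assumes "regulated l" and "regulated u" and sol: "RP_solution y l u x k \<phi>1 \<phi>2"
    and "t \<ge> 0"
  shows "rlim l t \<le> rlim x t" and "rlim x t \<le> rlim u t"
proof -
  have "regulated x"
    using sol by (simp add: RP_solution_def)
  then show "rlim l t \<le> rlim x t" and "rlim x t \<le> rlim u t"
    using assms RP_solution_bounds[OF sol] by (auto intro!: rlim_mono regulated_tendsto_rlim)
qed

lemma RP_solution_jump_plus:
  assumes "regulated y" and sol: "RP_solution y l u x k \<phi>1 \<phi>2" and "t \<ge> 0"
  shows "jump_plus x t = jump_plus y t + jump_plus \<phi>1 t - jump_plus \<phi>2 t"
proof (rule jump_plus_add_diff)
  show "(y \<longlongrightarrow> rlim y t) (at_right t)"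
    using assms(1,3) by (rule regulated_tendsto_rlim)
  show "(\<phi>1 \<longlongrightarrow> rlim \<phi>1 t) (at_right t)" and "(\<phi>2 \<longlongrightarrow> rlim \<phi>2 t) (at_right t)"
    using sol \<open>t \<ge> 0\<close> by (auto simp: RP_solution_def intro: mono_on_tendsto_rlim)
  show "x s = y s + \<phi>1 s - \<phi>2 s" if "s \<ge> t" for s
    using sol that \<open>t \<ge> 0\<close> by (auto simp: RP_solution_def)
qed

lemma RP_solution_jump_plus1_pos:
  assumes "regulated l" and "regulated u" and sol: "RP_solution y l u x k \<phi>1 \<phi>2"
    and "t \<ge> 0" and "jump_plus \<phi>1 t > 0"
  shows "rlim x t = rlim l t" and "x t = u t"
proof -
  have t_mem: "t \<in> {0..t}" using \<open>t \<ge> 0\<close> by simp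
  have sum_rlim: "((\<lambda>s. (rlim x s - rlim l s) * jump_plus \<phi>1 s) has_sum 0) {0..t}"
    and sum_val: "((\<lambda>s. (u s - x s) * jump_plus \<phi>1 s) has_sum 0) {0..t}"
    using sol \<open>t \<ge> 0\<close> unfolding RP_solution_def by blast+
  have nonneg_rlim: "(rlim x s - rlim l s) * jump_plus \<phi>1 s \<ge> 0"
    and nonneg_val: "(u s - x s) * jump_plus \<phi>1 s \<ge> 0" if "s \<in> {0..t}" for s
  proof -
    have "s \<ge> 0" using that by simp
    then show "(rlim x s - rlim l s) * jump_plus \<phi>1 s \<ge> 0"
      and "(u s - x s) * jump_plus \<phi>1 s \<ge> 0"
      using RP_solution_rlim_bounds[OF assms(1-3)] RP_solution_bounds[OF sol]
        RP_solution_jump_plus_nonneg[OF sol] by simp_all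
  qed
  have "(rlim x t - rlim l t) * jump_plus \<phi>1 t = 0"
    using nonneg_has_sum_le_0D[OF sum_rlim order_refl nonneg_rlim t_mem] .
  moreover have "(u t - x t) * jump_plus \<phi>1 t = 0"
    using nonneg_has_sum_le_0D[OF sum_val order_refl nonneg_val t_mem] .
  ultimately show "rlim x t = rlim l t" and "x t = u t"
    using \<open>jump_plus \<phi>1 t > 0\<close> by simp_all
qed

lemma RP_solution_jump_plus2_pos:
  assumes "regulated l" and "regulated u" and sol: "RP_solution y l u x k \<phi>1 \<phi>2"
    and "t \<ge> 0" and "jump_plus \<phi>2 t > 0"
  shows "rlim x t = rlim u t" and "x t = l t"
proof -
  have t_mem: "t \<in> {0..t}" using \<open>t \<ge> 0\<close> by simp
  have sum_rlim: "((\<lambda>s. (rlim u s - rlim x s) * jump_plus \<phi>2 s) has_sum 0) {0..t}"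
    and sum_val: "((\<lambda>s. (x s - l s) * jump_plus \<phi>2 s) has_sum 0) {0..t}"
    using sol \<open>t \<ge> 0\<close> unfolding RP_solution_def by blast+
  have nonneg_rlim: "(rlim u s - rlim x s) * jump_plus \<phi>2 s \<ge> 0"
    and nonneg_val: "(x s - l s) * jump_plus \<phi>2 s \<ge> 0" if "s \<in> {0..t}" for s
  proof -
    have "s \<ge> 0" using that by simp
    then show "(rlim u s - rlim x s) * jump_plus \<phi>2 s \<ge> 0"
      and "(x s - l s) * jump_plus \<phi>2 s \<ge> 0"
      using RP_solution_rlim_bounds[OF assms(1-3)] RP_solution_bounds[OF sol]
        RP_solution_jump_plus_nonneg[OF sol] by simp_all
  qed
  have "(rlim u t - rlim x t) * jump_plus \<phi>2 t = 0"
    using nonneg_has_sum_le_0D[OF sum_rlim order_refl nonneg_rlim t_mem] .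
  moreover have "(x t - l t) * jump_plus \<phi>2 t = 0"
    using nonneg_has_sum_le_0D[OF sum_val order_refl nonneg_val t_mem] .
  ultimately show "rlim x t = rlim u t" and "x t = l t"
    using \<open>jump_plus \<phi>2 t > 0\<close> by simp_all
qed

lemma RP_solution_jump_plus_disjoint:
  assumes "regulated l" and "regulated u" and sol: "RP_solution y l u x k \<phi>1 \<phi>2"
    and "t \<ge> 0" and "l t < u t"
  shows "\<not> (jump_plus \<phi>1 t > 0 \<and> jump_plus \<phi>2 t > 0)"
  using RP_solution_jump_plus1_pos(2)[OF assms(1-4)] RP_solution_jump_plus2_pos(2)[OF assms(1-4)]
    \<open>l t < u t\<close> by auto

lemma RP_solution_jump_plus1_pos_transfer:
  assumes reg: "regulated y" "regulated l" "regulated u"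
    and sol: "RP_solution y l u x k \<phi>1 \<phi>2" and sol': "RP_solution y l u x' k' \<psi>1 \<psi>2"
    and "t \<ge> 0" and "l t < u t" and "jump_plus \<phi>1 t > 0"
  shows "jump_plus \<psi>1 t > 0"
proof (rule ccontr)
  assume "\<not> jump_plus \<psi>1 t > 0"
  then have "jump_plus x' t \<le> jump_plus y t"
    using RP_solution_jump_plus[OF reg(1) sol' \<open>t \<ge> 0\<close>]
      RP_solution_jump_plus_nonneg(2)[OF sol' \<open>t \<ge> 0\<close>] by simp
  also have "\<dots> < jump_plus x t"
    using RP_solution_jump_plus[OF reg(1) sol \<open>t \<ge> 0\<close>] \<open>jump_plus \<phi>1 t > 0\<close>
      RP_solution_jump_plus_disjoint[OF reg(2,3) sol \<open>t \<ge> 0\<close> \<open>l t < u t\<close>]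
      RP_solution_jump_plus_nonneg(2)[OF sol \<open>t \<ge> 0\<close>] by simp
  also have "\<dots> = rlim l t - u t"
    using RP_solution_jump_plus1_pos[OF reg(2,3) sol \<open>t \<ge> 0\<close> \<open>jump_plus \<phi>1 t > 0\<close>]
    by (simp add: jump_plus_def)
  also have "\<dots> \<le> jump_plus x' t"
    using RP_solution_rlim_bounds(1)[OF reg(2,3) sol' \<open>t \<ge> 0\<close>]
      RP_solution_bounds(2)[OF sol' \<open>t \<ge> 0\<close>] by (simp add: jump_plus_def)
  finally show False by simp
qed

lemma RP_solution_jump_plus2_pos_transfer:
  assumes reg: "regulated y" "regulated l" "regulated u"
    and sol: "RP_solution y l u x k \<phi>1 \<phi>2" and sol': "RP_solution y l u x' k' \<psi>1 \<psi>2"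
    and "t \<ge> 0" and "l t < u t" and "jump_plus \<phi>2 t > 0"
  shows "jump_plus \<psi>2 t > 0"
proof (rule ccontr)
  assume "\<not> jump_plus \<psi>2 t > 0"
  then have "jump_plus y t \<le> jump_plus x' t"
    using RP_solution_jump_plus[OF reg(1) sol' \<open>t \<ge> 0\<close>]
      RP_solution_jump_plus_nonneg(1)[OF sol' \<open>t \<ge> 0\<close>] by simp
  also have "\<dots> \<le> rlim u t - l t"
    using RP_solution_rlim_bounds(2)[OF reg(2,3) sol' \<open>t \<ge> 0\<close>]
      RP_solution_bounds(1)[OF sol' \<open>t \<ge> 0\<close>] by (simp add: jump_plus_def)
  also have "\<dots> = jump_plus x t"
    using RP_solution_jump_plus2_pos[OF reg(2,3) sol \<open>t \<ge> 0\<close> \<open>jump_plus \<phi>2 t > 0\<close>]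
    by (simp add: jump_plus_def)
  also have "\<dots> < jump_plus y t"
    using RP_solution_jump_plus[OF reg(1) sol \<open>t \<ge> 0\<close>] \<open>jump_plus \<phi>2 t > 0\<close>
      RP_solution_jump_plus_disjoint[OF reg(2,3) sol \<open>t \<ge> 0\<close> \<open>l t < u t\<close>]
      RP_solution_jump_plus_nonneg(1)[OF sol \<open>t \<ge> 0\<close>] by simp
  finally show False by simp
qed

theorem lemma1:
  fixes y l u x k \<phi>1 \<phi>2 x' k' \<psi>1 \<psi>2 :: "real \<Rightarrow> real"
  assumes "regulated y" and "regulated l" and "regulated u"
    and "\<forall>t\<ge>0. l t \<le> u t"
    and "l 0 \<le> y 0" and "y 0 \<le> u 0"
    and "\<forall>t\<ge>0. (INF s\<in>{0..t}. u s - l s) > 0"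
    and "RP_solution y l u x k \<phi>1 \<phi>2"
    and "RP_solution y l u x' k' \<psi>1 \<psi>2"
  shows "{t. t \<ge> 0 \<and> jump_plus \<phi>1 t > 0} \<inter> {t. t \<ge> 0 \<and> jump_plus \<phi>2 t > 0} = {}
    \<and> {t. t \<ge> 0 \<and> jump_plus \<phi>1 t > 0} = {t. t \<ge> 0 \<and> jump_plus \<psi>1 t > 0}
    \<and> {t. t \<ge> 0 \<and> jump_plus \<phi>2 t > 0} = {t. t \<ge> 0 \<and> jump_plus \<psi>2 t > 0}"
proof -
  have gap: "l t < u t" if "t \<ge> 0" for t
  proof -
    have "(INF s\<in>{0..t}. u s - l s) \<le> u t - l t"
      by (rule cINF_lower) (use that assms(4) in \<open>auto intro!: bdd_belowI2[where m = 0]\<close>)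
    with assms(7) that show ?thesis by force
  qed
  note reg = assms(1-3) and sol = assms(8) and sol' = assms(9)
  have "jump_plus \<phi>1 t > 0 \<longleftrightarrow> jump_plus \<psi>1 t > 0"
    and "jump_plus \<phi>2 t > 0 \<longleftrightarrow> jump_plus \<psi>2 t > 0" if "t \<ge> 0" for t
    using RP_solution_jump_plus1_pos_transfer[OF reg sol sol' that gap[OF that]]
      RP_solution_jump_plus1_pos_transfer[OF reg sol' sol that gap[OF that]]
      RP_solution_jump_plus2_pos_transfer[OF reg sol sol' that gap[OF that]]
      RP_solution_jump_plus2_pos_transfer[OF reg sol' sol that gap[OF that]] by blast+
  moreover have "\<not> (jump_plus \<phi>1 t > 0 \<and> jump_plus \<phi>2 t > 0)" if "t \<ge> 0" for t
    using RP_solution_jump_plus_disjoint[OF reg(2,3) sol that gap[OF that]] .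
  ultimately show ?thesis by blast
qed

end
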